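(* Let $a,b,\varepsilon,\beta$ be positive constants, $L>0$, $T>0$, $\Omega_T=\{(x,t):0\le x\le L,\ 0<t\le T\}$, let $f$ be continuous in $\Omega_T$ and $u_0$ continuous on $[0,L]$, and let $u$ be the solution of \[ \begin{cases} u_t-\varepsilon u_{xx}+a u+b\displaystyle\int_0^t e^{-\beta(t-\tau)}u(x,\tau)\,d\tau=f(x,t), & (x,t)\in\Omega_T,\\ u(x,0)=u_0(x), & x\in[0,L],\\ u_x(0,t)=0,\quad u_x(L,t)=0, & 0<t\le T, \end{cases} \] given by \[ u(x,t)=\int_0^L\big[\theta_0(|x-\xi|,t)+\theta_0(x+\xi,t)\big]u_0(\xi)\,d\xi+\int_0^t d\tau\int_0^L\big[\theta_0(|x-\xi|,t-\tau)+\theta_0(x+\xi,t-\tau)\big]f(\xi,\tau)\,d\xi . \] Then, for large $t$, $u$ verifies the estimate \[ |u(x,t)|\le 2\Big[\|f\|\,\beta_0+\|u_0\|\,(1+\sqrt b\,\pi\, t)\,e^{-\omega t}\Big], \] where $\omega=\min(a,\beta)$ and $\beta_0=\dfrac1a+\pi\sqrt b\,\dfrac{a+\beta}{2(a\beta)^{3/2}}$.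
   Context: $J_1$ is the Bessel function of the first kind of order $1$. $K_0(x,t)=\frac{1}{2\sqrt{\pi\varepsilon}}\Big[\frac{e^{-\frac{x^2}{4\varepsilon t}-at}}{\sqrt t}-\sqrt b\int_0^t\frac{e^{-\frac{x^2}{4\varepsilon y}-ay}}{\sqrt{t-y}}e^{-\beta(t-y)}J_1(2\sqrt{by(t-y)})\,dy\Big]$ and $\theta_0(x,t)=\sum_{n=-\infty}^{\infty}K_0(x+2nL,t)$. Norms: $\|u_0\|=\sup_{0\le x\le L}|u_0(x)|$, $\|f\|=\sup_{\Omega_T}|f(x,t)|$. *)

theory Defs
  imports "HOL-Analysis.Analysis"
begin

definition bessel_J1 :: "real \<Rightarrow> real" where
  "bessel_J1 z = (\<Sum>m. (-1) ^ m / (fact m * fact (m + 1)) * (z / 2) ^ (2 * m + 1))"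

definition K0 :: "real \<Rightarrow> real \<Rightarrow> real \<Rightarrow> real \<Rightarrow> real \<Rightarrow> real \<Rightarrow> real" where
  "K0 a b eps beta x t =
     1 / (2 * sqrt (pi * eps)) *
     (exp (- (x ^ 2) / (4 * eps * t) - a * t) / sqrt t
      - sqrt b * integral {0..t} (\<lambda>y.
           exp (- (x ^ 2) / (4 * eps * y) - a * y) / sqrt (t - y)
           * exp (- beta * (t - y)) * bessel_J1 (2 * sqrt (b * y * (t - y)))))"

definition theta0 :: "real \<Rightarrow> real \<Rightarrow> real \<Rightarrow> real \<Rightarrow> real \<Rightarrow> real \<Rightarrow> real \<Rightarrow> real" where
  "theta0 a b eps beta L x t = (\<Sum>\<^sub>\<infinity>n\<in>(UNIV :: int set). K0 a b eps beta (x + 2 * of_int n * L) t)"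

definition u_sol ::
  "real \<Rightarrow> real \<Rightarrow> real \<Rightarrow> real \<Rightarrow> real \<Rightarrow> (real \<Rightarrow> real \<Rightarrow> real) \<Rightarrow> (real \<Rightarrow> real)
   \<Rightarrow> real \<Rightarrow> real \<Rightarrow> real" where
  "u_sol a b eps beta L f u0 x t =
     integral {0..L} (\<lambda>\<xi>. (theta0 a b eps beta L \<bar>x - \<xi>\<bar> t + theta0 a b eps beta L (x + \<xi>) t) * u0 \<xi>)
   + integral {0..t} (\<lambda>\<tau>. integral {0..L} (\<lambda>\<xi>.
       (theta0 a b eps beta L \<bar>x - \<xi>\<bar> (t - \<tau>) + theta0 a b eps beta L (x + \<xi>) (t - \<tau>)) * f \<xi> \<tau>))"

definition norm0 :: "real \<Rightarrow> (real \<Rightarrow> real) \<Rightarrow> real" where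
  "norm0 L u0 = Sup ((\<lambda>x. \<bar>u0 x\<bar>) ` {0..L})"

definition normf :: "real \<Rightarrow> real \<Rightarrow> (real \<Rightarrow> real \<Rightarrow> real) \<Rightarrow> real" where
  "normf L T f = Sup ((\<lambda>(x, t). \<bar>f x t\<bar>) ` ({0..L} \<times> {0<..T}))"

end

theory Submission
  imports Defs "HOL-Probability.Distributions"
begin

text \<open>The energy \<open>J0(z)^2 + J1(z)^2\<close> is nonincreasing for \<open>z \<ge> 0\<close>, so \<open>\<bar>J1\<bar> \<le> 1\<close>.
  Replacing \<open>J1\<close> by \<open>1\<close> bounds \<open>\<bar>K0(y, s)\<bar>\<close> by a nonnegative function of \<open>y\<close> whose
  integral over the real line, computed with Gaussian integrals, is
  \<open>A(s) = exp(-a s) + sqrt b * \<integral>\<^sub>0\<^sup>s exp(-a w) sqrt w exp(-beta (s - w)) / sqrt (s - w) dw\<close>.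
  By the method of images, the integral of \<open>\<bar>theta0(\<bar>x - \<xi>\<bar>, s) + theta0(x + \<xi>, s)\<bar>\<close> over
  \<open>\<xi> \<in> [0, L]\<close> is at most that same integral. Hence the initial-value term is at most
  \<open>\<parallel>u0\<parallel> A(t) \<le> \<parallel>u0\<parallel> (1 + 2 sqrt b t) exp(-\<omega> t)\<close>, and by Fubini and two Gamma integrals the
  source term is at most \<open>\<parallel>f\<parallel> \<integral>\<^sub>0\<^sup>\<infinity> A = \<parallel>f\<parallel> (1/a + \<pi> sqrt b / (2 a^(3/2) sqrt beta))\<close>. Both bounds
  hold for every \<open>t > 0\<close>, so \<open>t0 = 0\<close> works.\<close>

section \<open>The Bessel function \<open>J\<^sub>1\<close> is bounded by one\<close>

definition J1_coeff :: "nat \<Rightarrow> real" where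
  "J1_coeff m = (-1) ^ m / (fact m * fact (m + 1))"

definition J0_coeff :: "nat \<Rightarrow> real" where
  "J0_coeff m = (-1) ^ m / (fact m)\<^sup>2"

lemma summable_powser_by_inverse_fact:
  fixes c :: "nat \<Rightarrow> real"
  assumes "\<And>n. \<bar>c n\<bar> \<le> inverse (fact n)"
  shows "summable (\<lambda>n. c n * y ^ n)"
proof (rule summable_comparison_test'[OF summable_exp[of "\<bar>y\<bar>"], of 0])
  fix n
  show "norm (c n * y ^ n) \<le> inverse (fact n) * \<bar>y\<bar> ^ n"
    using assms[of n] by (simp add: abs_mult power_abs mult_right_mono)
qed

lemma abs_J1_coeff_le: "\<bar>J1_coeff n\<bar> \<le> inverse (fact n)"
  using fact_ge_1[of "Suc n", where 'a=real]
  by (simp add: J1_coeff_def abs_mult power_abs divide_simps)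

lemma abs_J0_coeff_le: "\<bar>J0_coeff n\<bar> \<le> inverse (fact n)"
  by (simp add: J0_coeff_def abs_mult power_abs divide_simps power2_eq_square)

lemma summable_J1_coeff: "summable (\<lambda>n. J1_coeff n * y ^ n)"
  by (rule summable_powser_by_inverse_fact[OF abs_J1_coeff_le])

lemma summable_J0_coeff: "summable (\<lambda>n. J0_coeff n * y ^ n)"
  by (rule summable_powser_by_inverse_fact[OF abs_J0_coeff_le])

text \<open>\<open>J0_series (z\<^sup>2/4) = J\<^sub>0 z\<close> and \<open>(z/2) * J1_series (z\<^sup>2/4) = J\<^sub>1 z\<close>; working in the
  variable \<open>x = z\<^sup>2/4\<close> keeps both series power series.\<close>
definition J1_series :: "real \<Rightarrow> real" where
  "J1_series x = (\<Sum>n. J1_coeff n * x ^ n)"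

definition J0_series :: "real \<Rightarrow> real" where
  "J0_series x = (\<Sum>n. J0_coeff n * x ^ n)"

lemma diffs_J0_coeff: "diffs J0_coeff = (\<lambda>n. - J1_coeff n)"
  by (rule ext) (simp add: diffs_def J0_coeff_def J1_coeff_def divide_simps power2_eq_square fact_Suc)

lemma J0_series_has_derivative: "(J0_series has_real_derivative - J1_series x) (at x)"
proof -
  have "(J0_series has_real_derivative (\<Sum>n. diffs J0_coeff n * x ^ n)) (at x)"
    unfolding J0_series_def by (rule termdiffs_strong_converges_everywhere) (rule summable_J0_coeff)
  also have "(\<Sum>n. diffs J0_coeff n * x ^ n) = - J1_series x"
    unfolding diffs_J0_coeff J1_series_def using summable_J1_coeff by (simp add: suminf_minus)
  finally show ?thesis .
qed

lemma J1_series_has_derivative: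
  "(J1_series has_real_derivative (\<Sum>n. diffs J1_coeff n * x ^ n)) (at x)"
  unfolding J1_series_def by (rule termdiffs_strong_converges_everywhere) (rule summable_J1_coeff)

lemma powser_times_diffs:
  fixes c :: "nat \<Rightarrow> real"
  assumes "summable (\<lambda>n. diffs c n * x ^ n)"
  shows "summable (\<lambda>n. of_nat n * c n * x ^ n)"
    and "x * (\<Sum>n. diffs c n * x ^ n) = (\<Sum>n. of_nat n * c n * x ^ n)"
proof -
  have shifted: "(\<lambda>n. x * (diffs c n * x ^ n)) = (\<lambda>n. of_nat (Suc n) * c (Suc n) * x ^ Suc n)"
    by (simp add: diffs_def algebra_simps)
  have "summable (\<lambda>n. of_nat (Suc n) * c (Suc n) * x ^ Suc n)"
    using summable_mult[OF assms, of x] by (simp only: shifted)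
  then show sum: "summable (\<lambda>n. of_nat n * c n * x ^ n)"
    by (subst summable_Suc_iff[symmetric])
  have "x * (\<Sum>n. diffs c n * x ^ n) = (\<Sum>n. of_nat (Suc n) * c (Suc n) * x ^ Suc n)"
    using suminf_mult[OF assms, of x] by (simp only: shifted)
  also have "\<dots> = (\<Sum>n. of_nat n * c n * x ^ n)"
    using sum by (subst suminf_split_head) auto
  finally show "x * (\<Sum>n. diffs c n * x ^ n) = (\<Sum>n. of_nat n * c n * x ^ n)" .
qed

lemma J1_series_plus_deriv:
  "J1_series x + x * (\<Sum>n. diffs J1_coeff n * x ^ n) = J0_series x"
proof -
  have sd: "summable (\<lambda>n. diffs J1_coeff n * x ^ n)"
    by (rule termdiff_converges_all) (rule summable_J1_coeff)
  have coeff: "J1_coeff n + of_nat n * J1_coeff n = J0_coeff n" for n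
    unfolding J1_coeff_def J0_coeff_def
    by (simp add: divide_simps power2_eq_square fact_Suc) (simp add: algebra_simps)
  have "J1_series x + x * (\<Sum>n. diffs J1_coeff n * x ^ n)
      = (\<Sum>n. J1_coeff n * x ^ n + of_nat n * J1_coeff n * x ^ n)"
    unfolding J1_series_def powser_times_diffs(2)[OF sd]
    by (rule suminf_add[OF summable_J1_coeff powser_times_diffs(1)[OF sd]])
  also have "\<dots> = J0_series x"
    unfolding J0_series_def by (rule suminf_cong) (simp add: coeff[symmetric] algebra_simps)
  finally show ?thesis .
qed

lemma J0_series_zero: "J0_series 0 = 1"
  unfolding J0_series_def using powser_zero[of J0_coeff] by (simp add: J0_coeff_def)

text \<open>The energy \<open>J0_series\<^sup>2 + x J1_series\<^sup>2\<close> has derivative \<open>- J1_series\<^sup>2\<close>.\<close>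
lemma J_series_energy_le:
  assumes "x \<ge> 0"
  shows "(J0_series x)\<^sup>2 + x * (J1_series x)\<^sup>2 \<le> 1"
proof -
  let ?E = "\<lambda>x. (J0_series x)\<^sup>2 + x * (J1_series x)\<^sup>2"
  have "?E x \<le> ?E 0"
  proof (rule DERIV_nonpos_imp_nonincreasing[OF assms])
    fix y
    let ?D = "\<Sum>n. diffs J1_coeff n * y ^ n"
    have "(?E has_real_derivative
            2 * (- J1_series y * J0_series y) + ((J1_series y)\<^sup>2 + 2 * (?D * J1_series y) * y)) (at y)"
      using DERIV_add[OF DERIV_power[OF J0_series_has_derivative[of y], where n=2]
          DERIV_mult[OF DERIV_ident DERIV_power[OF J1_series_has_derivative[of y], where n=2]]]
      by simp
    also have "2 * (- J1_series y * J0_series y) + ((J1_series y)\<^sup>2 + 2 * (?D * J1_series y) * y)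
        = - (J1_series y)\<^sup>2"
      unfolding J1_series_plus_deriv[of y, symmetric] by (simp add: algebra_simps power2_eq_square)
    finally show "\<exists>d. (?E has_real_derivative d) (at y) \<and> d \<le> 0" by auto
  qed
  then show ?thesis using J0_series_zero by simp
qed

lemma bessel_J1_eq_J1_series: "bessel_J1 z = z / 2 * J1_series ((z / 2)\<^sup>2)"
proof -
  have four: "(2::real) ^ (m * 2) = 4 ^ m" for m
    by (simp add: power_mult power2_eq_square power_mult_distrib[symmetric])
  have "bessel_J1 z = (\<Sum>m. z / 2 * (J1_coeff m * ((z / 2)\<^sup>2) ^ m))"
    unfolding bessel_J1_def J1_coeff_def
    by (rule arg_cong[where f=suminf]) (auto simp: power_mult[symmetric] field_simps four)
  also have "\<dots> = z / 2 * J1_series ((z / 2)\<^sup>2)"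
    unfolding J1_series_def by (rule suminf_mult[OF summable_J1_coeff])
  finally show ?thesis .
qed

lemma abs_bessel_J1_le_1: "\<bar>bessel_J1 z\<bar> \<le> 1"
proof -
  have "(bessel_J1 z)\<^sup>2 = (z / 2)\<^sup>2 * (J1_series ((z / 2)\<^sup>2))\<^sup>2"
    unfolding bessel_J1_eq_J1_series by (simp add: power2_eq_square)
  also have "\<dots> \<le> 1"
    using J_series_energy_le[of "(z / 2)\<^sup>2"] by (smt (verit) zero_le_power2)
  finally show ?thesis using abs_square_le_1 by blast
qed

section \<open>Lebesgue integral estimates\<close>

lemma abs_integral_le_nn_integral:
  fixes g :: "real \<Rightarrow> real" and H :: "real \<Rightarrow> ennreal"
  assumes "S \<in> sets borel" and "H \<in> borel_measurable borel"
    and bound: "AE x in lborel. x \<in> S \<longrightarrow> ennreal \<bar>g x\<bar> \<le> H x"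
  shows "ennreal \<bar>integral S g\<bar> \<le> (\<integral>\<^sup>+ x. H x * indicator S x \<partial>lborel)"
proof (cases "g integrable_on S")
  case False
  then show ?thesis by (simp add: not_integrable_integral)
next
  case True
  let ?f = "\<lambda>x. indicator S x * g x"
  have [measurable]: "?f \<in> borel_measurable lebesgue"
    using has_integral_implies_lebesgue_measurable[OF integrable_integral[OF True]] by simp
  have "(\<integral>\<^sup>+ x. ennreal (norm (?f x)) \<partial>lebesgue) \<le> (\<integral>\<^sup>+ x. H x * indicator S x \<partial>lebesgue)"
  proof (rule nn_integral_mono_AE)
    show "AE x in lebesgue. ennreal (norm (?f x)) \<le> H x * indicator S x"
      using AE_completion[OF bound] by eventually_elim (auto simp: indicator_def)
  qed
  also have "\<dots> = (\<integral>\<^sup>+ x. H x * indicator S x \<partial>lborel)"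
    by (simp add: nn_integral_completion)
  finally have le: "(\<integral>\<^sup>+ x. ennreal (norm (?f x)) \<partial>lebesgue) \<le> (\<integral>\<^sup>+ x. H x * indicator S x \<partial>lborel)" .
  show ?thesis
  proof (cases "(\<integral>\<^sup>+ x. H x * indicator S x \<partial>lborel) = \<infinity>")
    case True
    then show ?thesis by simp
  next
    case False
    have int: "integrable lebesgue ?f"
      using le False by (intro integrableI_bounded) (simp_all add: top.not_eq_extremum le_less_trans)
    have "integral S g = integral UNIV ?f"
      by (subst integral_restrict_UNIV[symmetric])
        (rule arg_cong[where f="integral UNIV"], auto simp: indicator_def)
    also have "\<dots> = (\<integral>x. ?f x \<partial>lebesgue)"
      by (rule integral_lebesgue[OF int])
    finally have "integral S g = (\<integral>x. ?f x \<partial>lebesgue)" .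
    then have "\<bar>integral S g\<bar> \<le> (\<integral>x. norm (?f x) \<partial>lebesgue)"
      using integral_norm_bound[of lebesgue ?f] by simp
    then have "ennreal \<bar>integral S g\<bar> \<le> ennreal (\<integral>x. norm (?f x) \<partial>lebesgue)"
      by (rule ennreal_leI)
    also have "\<dots> = (\<integral>\<^sup>+ x. ennreal (norm (?f x)) \<partial>lebesgue)"
      by (rule nn_integral_eq_integral[symmetric]) (auto intro: integrable_norm int)
    finally show ?thesis using le by (rule order_trans)
  qed
qed

lemma abs_infsum_le_nn_integral_count_space:
  fixes f :: "'i \<Rightarrow> real"
  shows "ennreal \<bar>infsum f UNIV\<bar> \<le> (\<integral>\<^sup>+ n. ennreal \<bar>f n\<bar> \<partial>count_space UNIV)"
proof (cases "f summable_on UNIV")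
  case False
  then show ?thesis by (simp add: infsum_not_exists)
next
  case True
  then have abs: "(\<lambda>n. \<bar>f n\<bar>) summable_on UNIV"
    using summable_on_iff_abs_summable_on_real by auto
  have "ennreal \<bar>infsum f UNIV\<bar> \<le> ennreal (infsum (\<lambda>n. \<bar>f n\<bar>) UNIV)"
    using norm_infsum_bound[of f UNIV] abs by (simp add: ennreal_leI)
  also have "\<dots> = (SUP F\<in>{F. finite F \<and> F \<subseteq> UNIV}. ennreal (sum (\<lambda>n. \<bar>f n\<bar>) F))"
    by (rule infsum_nonneg_is_SUPREMUM_ennreal[OF abs]) simp
  also have "\<dots> \<le> (\<integral>\<^sup>+ n. ennreal \<bar>f n\<bar> \<partial>count_space UNIV)"
  proof (rule SUP_least)
    fix F :: "'i set"
    assume "F \<in> {F. finite F \<and> F \<subseteq> UNIV}"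
    then have "ennreal (sum (\<lambda>n. \<bar>f n\<bar>) F) = (\<integral>\<^sup>+ n. ennreal \<bar>f n\<bar> * indicator F n \<partial>count_space UNIV)"
      by (simp add: nn_integral_count_space_finite nn_integral_count_space_indicator[symmetric])
    also have "\<dots> \<le> (\<integral>\<^sup>+ n. ennreal \<bar>f n\<bar> \<partial>count_space UNIV)"
      by (intro nn_integral_mono) (auto simp: indicator_def)
    finally show "ennreal (sum (\<lambda>n. \<bar>f n\<bar>) F) \<le> (\<integral>\<^sup>+ n. ennreal \<bar>f n\<bar> \<partial>count_space UNIV)" .
  qed
  finally show ?thesis .
qed

lemma nn_integral_gaussian:
  fixes k :: real
  assumes "k > 0"
  shows "(\<integral>\<^sup>+ y. ennreal (exp (- (y\<^sup>2) / k)) \<partial>lborel) = ennreal (sqrt (pi * k))"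
proof -
  define \<sigma> where "\<sigma> = sqrt (k / 2)"
  have \<sigma>: "\<sigma> > 0" "2 * \<sigma>\<^sup>2 = k" "sqrt 2 * \<sigma> = sqrt k"
    using assms by (auto simp: \<sigma>_def real_sqrt_mult[symmetric])
  have density: "exp (- (y\<^sup>2) / k) = sqrt (pi * k) * normal_density 0 \<sigma> y" for y
    unfolding normal_density_def \<sigma>(2) using \<sigma> assms by (simp add: real_sqrt_mult)
  have "(\<integral>\<^sup>+ y. ennreal (exp (- (y\<^sup>2) / k)) \<partial>lborel)
      = ennreal (sqrt (pi * k)) * (\<integral>\<^sup>+ y. ennreal (normal_density 0 \<sigma> y) \<partial>lborel)"
    unfolding density using assms
    by (subst nn_integral_cmult[symmetric]) (auto intro!: nn_integral_cong ennreal_mult simp: normal_density_nonneg)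
  also have "(\<integral>\<^sup>+ y. ennreal (normal_density 0 \<sigma> y) \<partial>lborel) = 1"
    using \<sigma> by (subst nn_integral_eq_integral) (auto simp: normal_density_nonneg)
  finally show ?thesis by simp
qed

lemma nn_integral_gamma_scaled:
  fixes k p :: real
  assumes k: "k > 0" and p: "p > 0"
  shows "(\<integral>\<^sup>+ x. ennreal (indicator {0..} x * x powr (p - 1) * exp (- k * x)) \<partial>lborel)
    = ennreal (Gamma p / k powr p)"
proof -
  let ?g = "\<lambda>x. ennreal (indicator {0..} x * x powr (p - 1) * exp (- k * x))"
  let ?f = "\<lambda>t. ennreal (indicator {0..} t * t powr (p - 1) / exp t)"
  have rescale: "?f (0 + k * x) = ennreal (k powr (p - 1)) * ?g x" for x
  proof (cases "x \<ge> 0")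
    case True
    then have "?f (0 + k * x) = ennreal (k powr (p - 1) * (indicator {0..} x * x powr (p - 1) * exp (- k * x)))"
      using k by (simp add: powr_mult exp_minus field_simps indicator_def zero_le_mult_iff)
    then show ?thesis by (simp add: ennreal_mult True)
  next
    case False
    then show ?thesis using k by (simp add: indicator_def zero_le_mult_iff)
  qed
  have "ennreal (Gamma p) = (\<integral>\<^sup>+ t. ?f t \<partial>lborel)"
    using Gamma_conv_nn_integral_real[OF p] by simp
  also have "\<dots> = ennreal \<bar>k\<bar> * (\<integral>\<^sup>+ x. ?f (0 + k * x) \<partial>lborel)"
    by (rule nn_integral_real_affine) (use k in auto)
  also have "\<dots> = ennreal k * ennreal (k powr (p - 1)) * (\<integral>\<^sup>+ x. ?g x \<partial>lborel)"
    using k by (simp only: rescale) (simp add: nn_integral_cmult mult.assoc)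
  also have "ennreal k * ennreal (k powr (p - 1)) = ennreal (k powr p)"
    using k by (simp add: ennreal_mult[symmetric] powr_diff field_simps)
  finally have Gamma_eq: "ennreal (Gamma p) = ennreal (k powr p) * (\<integral>\<^sup>+ x. ?g x \<partial>lborel)" .
  have "ennreal (Gamma p / k powr p) = ennreal (Gamma p) * ennreal (1 / k powr p)"
    using k p by (simp add: ennreal_mult[symmetric] less_imp_le)
  also have "\<dots> = (\<integral>\<^sup>+ x. ?g x \<partial>lborel) * (ennreal (k powr p) * ennreal (1 / k powr p))"
    unfolding Gamma_eq by (simp add: mult_ac)
  also have "ennreal (k powr p) * ennreal (1 / k powr p) = 1"
    using k by (simp add: ennreal_mult[symmetric])
  finally show ?thesis by simp
qed

lemma Gamma_three_halves: "Gamma (3 / 2 :: real) = sqrt pi / 2"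
proof -
  have "(1 / 2 :: real) \<notin> \<int>\<^sub>\<le>\<^sub>0"
  proof
    assume "(1 / 2 :: real) \<in> \<int>\<^sub>\<le>\<^sub>0"
    then obtain n :: int where "real_of_int n * 2 = 1" by (auto simp: nonpos_Ints_def)
    then have "real_of_int (n * 2) = real_of_int 1" by simp
    then have "n * 2 = 1" by (simp only: of_int_eq_iff)
    then show False by presburger
  qed
  then have "Gamma (1 / 2 + 1 :: real) = 1 / 2 * Gamma (1 / 2)" by (rule Gamma_plus1)
  then show ?thesis by (simp add: Gamma_one_half_real)
qed

lemma nn_integral_exp_neg_halfline:
  fixes k :: real
  assumes "k > 0"
  shows "(\<integral>\<^sup>+ s. ennreal (exp (- k * s)) * indicator {0..} s \<partial>lborel) = ennreal (1 / k)"
proof -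
  have "(\<integral>\<^sup>+ s. ennreal (exp (- k * s)) * indicator {0..} s \<partial>lborel)
      = (\<integral>\<^sup>+ x. ennreal (indicator {0..} x * x powr (1 - 1) * exp (- k * x)) \<partial>lborel)"
  proof (rule nn_integral_cong_AE)
    show "AE x in lborel. ennreal (exp (- k * x)) * indicator {0..} x
        = ennreal (indicator {0..} x * x powr (1 - 1) * exp (- k * x))"
      using AE_lborel_singleton[of 0] by eventually_elim (auto simp: indicator_def)
  qed
  also have "\<dots> = ennreal (Gamma 1 / k powr 1)"
    by (rule nn_integral_gamma_scaled) (use assms in auto)
  finally show ?thesis using assms by simp
qed

lemma nn_integral_exp_neg_div_sqrt_halfline:
  fixes k :: real
  assumes "k > 0"
  shows "(\<integral>\<^sup>+ v. ennreal (exp (- k * v) / sqrt v) * indicator {0..} v \<partial>lborel)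
    = ennreal (sqrt pi / sqrt k)"
proof -
  have "x powr (1 / 2 - 1) = 1 / sqrt x" if "x \<ge> 0" for x :: real
    using that by (cases "x = 0") (simp_all add: powr_minus_divide powr_half_sqrt[symmetric])
  then have "(\<integral>\<^sup>+ v. ennreal (exp (- k * v) / sqrt v) * indicator {0..} v \<partial>lborel)
      = (\<integral>\<^sup>+ x. ennreal (indicator {0..} x * x powr (1 / 2 - 1) * exp (- k * x)) \<partial>lborel)"
    by (intro nn_integral_cong) (simp add: indicator_def)
  also have "\<dots> = ennreal (Gamma (1 / 2) / k powr (1 / 2))"
    by (rule nn_integral_gamma_scaled) (use assms in auto)
  finally show ?thesis
    using assms by (simp add: Gamma_one_half_real powr_half_sqrt less_imp_le)
qed

lemma nn_integral_sqrt_mult_exp_neg_halfline: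
  fixes k :: real
  assumes "k > 0"
  shows "(\<integral>\<^sup>+ w. ennreal (sqrt w * exp (- k * w)) * indicator {0..} w \<partial>lborel)
    = ennreal (sqrt pi / 2 / k powr (3 / 2))"
proof -
  have "x powr (3 / 2 - 1) = sqrt x" if "x \<ge> 0" for x :: real
    using that by (cases "x = 0") (simp_all add: powr_half_sqrt)
  then have "(\<integral>\<^sup>+ w. ennreal (sqrt w * exp (- k * w)) * indicator {0..} w \<partial>lborel)
      = (\<integral>\<^sup>+ x. ennreal (indicator {0..} x * x powr (3 / 2 - 1) * exp (- k * x)) \<partial>lborel)"
    by (intro nn_integral_cong) (simp add: indicator_def)
  also have "\<dots> = ennreal (Gamma (3 / 2) / k powr (3 / 2))"
    by (rule nn_integral_gamma_scaled) (use assms in auto)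
  finally show ?thesis by (simp add: Gamma_three_halves)
qed

lemma nn_integral_reflect_interval:
  fixes R :: "real \<Rightarrow> ennreal"
  assumes [measurable]: "R \<in> borel_measurable borel"
  shows "(\<integral>\<^sup>+ \<xi>. R (t - \<xi>) * indicator {0..L} \<xi> \<partial>lborel) = (\<integral>\<^sup>+ y. R y * indicator {t - L..t} y \<partial>lborel)"
proof -
  have "(\<integral>\<^sup>+ y. R y * indicator {t - L..t} y \<partial>lborel)
      = ennreal \<bar>-1\<bar> * (\<integral>\<^sup>+ \<xi>. R (t + (-1) * \<xi>) * indicator {t - L..t} (t + (-1) * \<xi>) \<partial>lborel)"
    by (rule nn_integral_real_affine) auto
  also have "\<dots> = (\<integral>\<^sup>+ \<xi>. R (t - \<xi>) * indicator {0..L} \<xi> \<partial>lborel)"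
    by (auto intro!: nn_integral_cong simp: indicator_def)
  finally show ?thesis ..
qed

lemma nn_integral_shift_interval:
  fixes R :: "real \<Rightarrow> ennreal"
  assumes [measurable]: "R \<in> borel_measurable borel"
  shows "(\<integral>\<^sup>+ \<xi>. R (t + \<xi>) * indicator {0..L} \<xi> \<partial>lborel) = (\<integral>\<^sup>+ y. R y * indicator {t..t + L} y \<partial>lborel)"
proof -
  have "(\<integral>\<^sup>+ y. R y * indicator {t..t + L} y \<partial>lborel)
      = ennreal \<bar>1\<bar> * (\<integral>\<^sup>+ \<xi>. R (t + 1 * \<xi>) * indicator {t..t + L} (t + 1 * \<xi>) \<partial>lborel)"
    by (rule nn_integral_real_affine) auto
  also have "\<dots> = (\<integral>\<^sup>+ \<xi>. R (t + \<xi>) * indicator {0..L} \<xi> \<partial>lborel)"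
    by (auto intro!: nn_integral_cong simp: indicator_def)
  finally show ?thesis ..
qed

lemma nn_integral_inverse_sqrt_diff:
  fixes s :: real
  assumes "s > 0"
  shows "(\<integral>\<^sup>+ w. ennreal (1 / sqrt (s - w)) * indicator {0..s} w \<partial>lborel) = ennreal (2 * sqrt s)"
proof -
  have "y powr (- 1 / 2) = 1 / sqrt y" if "y \<ge> 0" for y :: real
    using that by (cases "y = 0") (simp_all add: powr_minus_divide powr_half_sqrt[symmetric])
  then have "(\<integral>\<^sup>+ w. ennreal (1 / sqrt (s - w)) * indicator {0..s} w \<partial>lborel)
      = (\<integral>\<^sup>+ y. ennreal (y powr (- 1 / 2)) * indicator {0..s} y \<partial>lborel)"
    by (subst nn_integral_reflect_interval[of "\<lambda>y. ennreal (1 / sqrt y)"])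
      (auto intro!: nn_integral_cong simp: indicator_def)
  also have "\<dots> = ennreal (s powr (- 1 / 2 + 1) / (- 1 / 2 + 1))"
    by (rule nn_integral_has_integral_lebesgue'[OF _ has_integral_powr_from_0]) (use assms in auto)
  also have "s powr (- 1 / 2 + 1) / (- 1 / 2 + 1) = 2 * sqrt s"
    using assms by (simp add: powr_half_sqrt)
  finally show ?thesis .
qed

lemma pred_snd_in_atLeastAtMost_fst [measurable]:
  "Measurable.pred (borel \<Otimes>\<^sub>M borel) (\<lambda>x :: real \<times> real. snd x \<in> {0..fst x})"
  unfolding atLeastAtMost_iff by measurable

section \<open>Periodization and the method of images\<close>

definition periodize :: "real \<Rightarrow> (real \<Rightarrow> ennreal) \<Rightarrow> real \<Rightarrow> ennreal" where
  "periodize L R z = (\<integral>\<^sup>+ n. R (z + 2 * of_int n * L) \<partial>count_space (UNIV :: int set))"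

lemma periodize_abs:
  assumes even: "\<And>y. R (- y) = R y"
  shows "periodize L R \<bar>z\<bar> = periodize L R z"
proof (cases "z \<ge> 0")
  case False
  have "periodize L R \<bar>z\<bar> = (\<integral>\<^sup>+ n. R (z + 2 * of_int (- n) * L) \<partial>count_space (UNIV :: int set))"
    unfolding periodize_def using False even[of "z + 2 * of_int (- _) * L"]
    by (intro nn_integral_cong) (simp add: algebra_simps)
  also have "\<dots> = periodize L R z"
    unfolding periodize_def
    by (rule nn_integral_bij_count_space[of uminus UNIV UNIV "\<lambda>m. R (z + 2 * of_int m * L)"])
      (auto intro!: bij_betwI[of _ _ _ uminus])
  finally show ?thesis .
qed simp

lemma borel_measurable_periodize [measurable]:
  assumes [measurable]: "R \<in> borel_measurable borel"
  shows "periodize L R \<in> borel_measurable borel"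
proof -
  have "(\<lambda>p :: real \<times> int. of_int (snd p) :: real) \<in> borel_measurable (borel \<Otimes>\<^sub>M count_space UNIV)"
    by (rule measurable_compose[OF measurable_snd]) simp
  then have "(\<lambda>(z, n). R (z + 2 * of_int n * L)) \<in> borel_measurable (borel \<Otimes>\<^sub>M count_space (UNIV :: int set))"
    by (simp add: case_prod_beta')
  then show ?thesis
    unfolding periodize_def[abs_def]
    by (intro sigma_finite_measure.borel_measurable_nn_integral sigma_finite_measure_count_space_countable) auto
qed

lemma nn_integral_reflect_add_shift:
  fixes R :: "real \<Rightarrow> ennreal"
  assumes [measurable]: "R \<in> borel_measurable borel"
  shows "(\<integral>\<^sup>+ \<xi>. (R (t - \<xi>) + R (t + \<xi>)) * indicator {0..L} \<xi> \<partial>lborel)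
    = (\<integral>\<^sup>+ y. R y * indicator {t - L..<t + L} y \<partial>lborel)"
proof -
  have "(\<integral>\<^sup>+ \<xi>. (R (t - \<xi>) + R (t + \<xi>)) * indicator {0..L} \<xi> \<partial>lborel)
      = (\<integral>\<^sup>+ y. R y * indicator {t - L..t} y + R y * indicator {t..t + L} y \<partial>lborel)"
    by (simp add: distrib_right nn_integral_add nn_integral_reflect_interval nn_integral_shift_interval)
  also have "\<dots> = (\<integral>\<^sup>+ y. R y * indicator {t - L..<t + L} y \<partial>lborel)"
  proof (rule nn_integral_cong_AE)
    show "AE y in lborel. R y * indicator {t - L..t} y + R y * indicator {t..t + L} y
        = R y * indicator {t - L..<t + L} y"
      using AE_lborel_singleton[of t] AE_lborel_singleton[of "t + L"]
      by eventually_elim (auto simp: indicator_def)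
  qed
  finally show ?thesis .
qed

lemma nn_integral_count_space_indicator_tiling:
  fixes L :: real
  assumes "L > 0"
  shows "(\<integral>\<^sup>+ n. indicator {z + 2 * of_int n * L - L..<z + 2 * of_int n * L + L} y
      \<partial>count_space (UNIV :: int set)) = 1"
proof -
  define n0 where "n0 = \<lfloor>(y - z + L) / (2 * L)\<rfloor>"
  have "y \<in> {z + 2 * of_int n * L - L..<z + 2 * of_int n * L + L} \<longleftrightarrow> n = n0" for n
  proof -
    have "y \<in> {z + 2 * of_int n * L - L..<z + 2 * of_int n * L + L}
        \<longleftrightarrow> of_int n \<le> (y - z + L) / (2 * L) \<and> (y - z + L) / (2 * L) < of_int n + 1"
      using assms by (auto simp: field_simps)
    also have "\<dots> \<longleftrightarrow> n = n0" unfolding n0_def by (metis floor_eq_iff)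
    finally show ?thesis .
  qed
  then have "(\<lambda>n. indicator {z + 2 * of_int n * L - L..<z + 2 * of_int n * L + L} y)
      = (indicator {n0} :: int \<Rightarrow> ennreal)"
    by (auto simp: indicator_def)
  then show ?thesis by simp
qed

text \<open>Method of images: the reflected and shifted copies of \<open>[0, L]\<close> cover each point of the
  real line exactly once.\<close>
lemma nn_integral_periodize_images:
  fixes L :: real
  assumes L: "L > 0" and [measurable]: "R \<in> borel_measurable borel" and even: "\<And>y. R (- y) = R y"
  shows "(\<integral>\<^sup>+ \<xi>. (periodize L R \<bar>x - \<xi>\<bar> + periodize L R (x + \<xi>)) * indicator {0..L} \<xi> \<partial>lborel)
    = (\<integral>\<^sup>+ y. R y \<partial>lborel)"
proof -
  let ?t = "\<lambda>n :: int. x + 2 * of_int n * L"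
  let ?J = "\<lambda>n :: int. {?t n - L..<?t n + L}"
  have sum: "periodize L R \<bar>x - \<xi>\<bar> + periodize L R (x + \<xi>)
      = (\<integral>\<^sup>+ n. R (?t n - \<xi>) + R (?t n + \<xi>) \<partial>count_space UNIV)" for \<xi>
    unfolding periodize_abs[where R=R, OF even] unfolding periodize_def
    by (subst nn_integral_add[symmetric]) (auto intro!: nn_integral_cong simp: algebra_simps)
  have "(periodize L R \<bar>x - \<xi>\<bar> + periodize L R (x + \<xi>)) * indicator {0..L} \<xi>
      = (\<integral>\<^sup>+ n. (R (?t n - \<xi>) + R (?t n + \<xi>)) * indicator {0..L} \<xi> \<partial>count_space UNIV)" for \<xi>
    unfolding sum by (rule nn_integral_multc[symmetric]) simp
  then have "(\<integral>\<^sup>+ \<xi>. (periodize L R \<bar>x - \<xi>\<bar> + periodize L R (x + \<xi>)) * indicator {0..L} \<xi> \<partial>lborel)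
      = (\<integral>\<^sup>+ n. (\<integral>\<^sup>+ \<xi>. (R (?t n - \<xi>) + R (?t n + \<xi>)) * indicator {0..L} \<xi> \<partial>lborel) \<partial>count_space UNIV)"
    by (simp only:) (rule nn_integral_count_space_nn_integral, auto)
  also have "\<dots> = (\<integral>\<^sup>+ n. (\<integral>\<^sup>+ y. R y * indicator (?J n) y \<partial>lborel) \<partial>count_space UNIV)"
    by (simp only: nn_integral_reflect_add_shift[OF assms(2)])
  also have "\<dots> = (\<integral>\<^sup>+ y. (\<integral>\<^sup>+ n. R y * indicator (?J n) y \<partial>count_space UNIV) \<partial>lborel)"
    by (rule nn_integral_count_space_nn_integral[symmetric]) auto
  also have "\<dots> = (\<integral>\<^sup>+ y. R y \<partial>lborel)"
    by (intro nn_integral_cong)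
      (simp add: nn_integral_cmult nn_integral_count_space_indicator_tiling[OF L])
  finally show ?thesis .
qed

section \<open>Majorizing the kernel\<close>

locale K0_kernel =
  fixes a b eps beta L :: real
  assumes a: "a > 0" and b: "b > 0" and eps: "eps > 0" and beta: "beta > 0" and L: "L > 0"
begin

definition heat_kernel :: "real \<Rightarrow> real \<Rightarrow> real" where
  "heat_kernel s y = exp (- (y\<^sup>2) / (4 * eps * s) - a * s) / (2 * sqrt (pi * eps) * sqrt s)"

text \<open>\<open>heat_kernel w y * memory_weight s w\<close> is the integrand of the memory term of \<open>K0\<close>
  without its Bessel factor, so replacing \<open>J\<^sub>1\<close> by \<open>1\<close> turns \<open>K0\<close> into the nonnegative
  \<open>majorant\<close> below.\<close>
definition memory_weight :: "real \<Rightarrow> real \<Rightarrow> real" where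
  "memory_weight s w = sqrt w * exp (- beta * (s - w)) / sqrt (s - w)"

definition majorant :: "real \<Rightarrow> real \<Rightarrow> ennreal" where
  "majorant s y = ennreal (heat_kernel s y) + ennreal (sqrt b) *
     (\<integral>\<^sup>+ w. ennreal (heat_kernel w y * memory_weight s w) * indicator {0..s} w \<partial>lborel)"

definition majorant_mass :: "real \<Rightarrow> ennreal" where
  "majorant_mass s = ennreal (exp (- a * s)) + ennreal (sqrt b) *
     (\<integral>\<^sup>+ w. ennreal (exp (- a * w) * memory_weight s w) * indicator {0..s} w \<partial>lborel)"

lemma heat_kernel_nonneg: "s \<ge> 0 \<Longrightarrow> heat_kernel s y \<ge> 0"
  unfolding heat_kernel_def using eps by simp

lemma memory_weight_nonneg: "w \<in> {0..s} \<Longrightarrow> memory_weight s w \<ge> 0"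
  unfolding memory_weight_def by simp

lemma K0_eq_heat_kernel_minus_memory:
  "K0 a b eps beta y s = heat_kernel s y
     - sqrt b * integral {0..s} (\<lambda>w. heat_kernel w y * memory_weight s w * bessel_J1 (2 * sqrt (b * w * (s - w))))"
proof -
  let ?c = "2 * sqrt (pi * eps)"
  let ?g = "\<lambda>w. exp (- (y\<^sup>2) / (4 * eps * w) - a * w) / sqrt (s - w)
          * exp (- beta * (s - w)) * bessel_J1 (2 * sqrt (b * w * (s - w)))"
  have "?g w / ?c = heat_kernel w y * memory_weight s w * bessel_J1 (2 * sqrt (b * w * (s - w)))"
    if "w \<in> {0..s}" for w
  proof (cases "w = 0")
    case True
    \<comment> \<open>both sides vanish: \<open>heat_kernel 0 y = 0\<close> by division by zero, and \<open>J\<^sub>1 0 = 0\<close>\<close>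
    then show ?thesis by (simp add: bessel_J1_eq_J1_series heat_kernel_def)
  next
    case False
    then show ?thesis using that eps by (simp add: heat_kernel_def memory_weight_def)
  qed
  then have "integral {0..s} ?g / ?c
      = integral {0..s} (\<lambda>w. heat_kernel w y * memory_weight s w * bessel_J1 (2 * sqrt (b * w * (s - w))))"
    by (subst integral_divide[symmetric]) (rule integral_cong)
  moreover have "K0 a b eps beta y s
      = exp (- (y\<^sup>2) / (4 * eps * s) - a * s) / sqrt s / ?c - sqrt b * (integral {0..s} ?g / ?c)"
    unfolding K0_def by (simp add: diff_divide_distrib)
  ultimately show ?thesis
    unfolding heat_kernel_def by (simp add: mult.commute)
qed

lemma abs_K0_le_majorant:
  assumes "s > 0"
  shows "ennreal \<bar>K0 a b eps beta y s\<bar> \<le> majorant s y"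
proof -
  let ?I = "integral {0..s} (\<lambda>w. heat_kernel w y * memory_weight s w * bessel_J1 (2 * sqrt (b * w * (s - w))))"
  have I: "ennreal \<bar>?I\<bar> \<le> (\<integral>\<^sup>+ w. ennreal (heat_kernel w y * memory_weight s w) * indicator {0..s} w \<partial>lborel)"
  proof (rule abs_integral_le_nn_integral)
    show "AE w in lborel. w \<in> {0..s} \<longrightarrow>
        ennreal \<bar>heat_kernel w y * memory_weight s w * bessel_J1 (2 * sqrt (b * w * (s - w)))\<bar>
          \<le> ennreal (heat_kernel w y * memory_weight s w)"
    proof (intro AE_I2 impI ennreal_leI)
      fix w :: real
      assume w: "w \<in> {0..s}"
      let ?h = "heat_kernel w y * memory_weight s w"
      have h: "0 \<le> ?h"
        using w heat_kernel_nonneg memory_weight_nonneg by simp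
      have "\<bar>?h * bessel_J1 (2 * sqrt (b * w * (s - w)))\<bar> = ?h * \<bar>bessel_J1 (2 * sqrt (b * w * (s - w)))\<bar>"
        by (simp only: abs_mult[of ?h] abs_of_nonneg[OF h])
      also have "\<dots> \<le> ?h"
        by (rule mult_left_le[OF abs_bessel_J1_le_1 h])
      finally show "\<bar>?h * bessel_J1 (2 * sqrt (b * w * (s - w)))\<bar> \<le> ?h" .
    qed
  qed (simp_all add: heat_kernel_def memory_weight_def)
  have "\<bar>K0 a b eps beta y s\<bar> \<le> heat_kernel s y + sqrt b * \<bar>?I\<bar>"
    unfolding K0_eq_heat_kernel_minus_memory
    using abs_triangle_ineq4[of "heat_kernel s y" "sqrt b * ?I"] heat_kernel_nonneg[OF less_imp_le[OF assms]] b
    by (simp add: abs_mult)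
  then have "ennreal \<bar>K0 a b eps beta y s\<bar> \<le> ennreal (heat_kernel s y + sqrt b * \<bar>?I\<bar>)"
    by (rule ennreal_leI)
  also have "\<dots> = ennreal (heat_kernel s y) + ennreal (sqrt b) * ennreal \<bar>?I\<bar>"
    using heat_kernel_nonneg[OF less_imp_le[OF assms]] b by (simp add: ennreal_plus ennreal_mult)
  also have "\<dots> \<le> majorant s y"
    unfolding majorant_def by (intro add_left_mono mult_left_mono I) auto
  finally show ?thesis .
qed

lemma nn_integral_heat_kernel:
  assumes s: "s > 0"
  shows "(\<integral>\<^sup>+ y. ennreal (heat_kernel s y) \<partial>lborel) = ennreal (exp (- a * s))"
proof -
  let ?c = "exp (- a * s) / (2 * sqrt (pi * eps) * sqrt s)"
  have c: "?c \<ge> 0" using s eps by simp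
  have "heat_kernel s y = ?c * exp (- (y\<^sup>2) / (4 * eps * s))" for y
    unfolding heat_kernel_def by (simp add: exp_diff exp_minus field_simps)
  then have "ennreal (heat_kernel s y) = ennreal ?c * ennreal (exp (- (y\<^sup>2) / (4 * eps * s)))" for y
    by (simp only:) (rule ennreal_mult[OF c], simp)
  then have "(\<integral>\<^sup>+ y. ennreal (heat_kernel s y) \<partial>lborel)
      = ennreal ?c * (\<integral>\<^sup>+ y. ennreal (exp (- (y\<^sup>2) / (4 * eps * s))) \<partial>lborel)"
    by (simp only:) (rule nn_integral_cmult, measurable)
  also have "\<dots> = ennreal ?c * ennreal (sqrt (pi * (4 * eps * s)))"
    by (subst nn_integral_gaussian) (use s eps in auto)
  also have "\<dots> = ennreal (?c * sqrt (pi * (4 * eps * s)))"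
    by (rule ennreal_mult[symmetric]) (use c s eps in auto)
  also have "?c * sqrt (pi * (4 * eps * s)) = exp (- a * s)"
    using s eps by (simp add: real_sqrt_mult field_simps)
  finally show ?thesis .
qed

lemma borel_measurable_heat_kernel [measurable]:
  assumes [measurable]: "f \<in> borel_measurable M" "g \<in> borel_measurable M"
  shows "(\<lambda>x. heat_kernel (f x) (g x)) \<in> borel_measurable M"
  unfolding heat_kernel_def by measurable

lemma borel_measurable_memory_weight [measurable]:
  assumes [measurable]: "f \<in> borel_measurable M" "g \<in> borel_measurable M"
  shows "(\<lambda>x. memory_weight (f x) (g x)) \<in> borel_measurable M"
  unfolding memory_weight_def by measurable

lemma borel_measurable_majorant [measurable]: "majorant s \<in> borel_measurable borel"
  unfolding majorant_def by measurable

lemma majorant_even: "majorant s (- y) = majorant s y"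
  unfolding majorant_def heat_kernel_def by simp

lemma nn_integral_heat_kernel_memory_weight:
  assumes "w \<in> {0..s}"
  shows "(\<integral>\<^sup>+ y. ennreal (heat_kernel w y * memory_weight s w) \<partial>lborel)
    = ennreal (exp (- a * w) * memory_weight s w)"
proof (cases "w = 0")
  case True
  then show ?thesis by (simp add: memory_weight_def)
next
  case False
  with assms have w: "w > 0" by simp
  have "(\<integral>\<^sup>+ y. ennreal (heat_kernel w y * memory_weight s w) \<partial>lborel)
      = (\<integral>\<^sup>+ y. ennreal (heat_kernel w y) \<partial>lborel) * ennreal (memory_weight s w)"
    using w assms heat_kernel_nonneg memory_weight_nonneg
    by (subst nn_integral_multc[symmetric]) (auto intro!: nn_integral_cong ennreal_mult)
  also have "\<dots> = ennreal (exp (- a * w) * memory_weight s w)"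
    using w assms memory_weight_nonneg by (simp add: nn_integral_heat_kernel ennreal_mult)
  finally show ?thesis .
qed

lemma nn_integral_majorant:
  assumes s: "s > 0"
  shows "(\<integral>\<^sup>+ y. majorant s y \<partial>lborel) = majorant_mass s"
proof -
  let ?F = "\<lambda>y w. ennreal (heat_kernel w y * memory_weight s w) * indicator {0..s} w"
  have "(\<integral>\<^sup>+ y. majorant s y \<partial>lborel) = (\<integral>\<^sup>+ y. ennreal (heat_kernel s y) \<partial>lborel)
      + (\<integral>\<^sup>+ y. ennreal (sqrt b) * (\<integral>\<^sup>+ w. ?F y w \<partial>lborel) \<partial>lborel)"
    unfolding majorant_def by (rule nn_integral_add) measurable
  also have "\<dots> = ennreal (exp (- a * s)) + ennreal (sqrt b) * (\<integral>\<^sup>+ y. (\<integral>\<^sup>+ w. ?F y w \<partial>lborel) \<partial>lborel)"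
    by (simp only: nn_integral_heat_kernel[OF s]) (subst nn_integral_cmult, measurable)
  also have "(\<integral>\<^sup>+ y. (\<integral>\<^sup>+ w. ?F y w \<partial>lborel) \<partial>lborel) = (\<integral>\<^sup>+ w. (\<integral>\<^sup>+ y. ?F y w \<partial>lborel) \<partial>lborel)"
    by (rule lborel_pair.Fubini') measurable
  also have "\<dots> = (\<integral>\<^sup>+ w. ennreal (exp (- a * w) * memory_weight s w) * indicator {0..s} w \<partial>lborel)"
    by (intro nn_integral_cong)
      (simp add: nn_integral_multc nn_integral_heat_kernel_memory_weight indicator_def)
  finally show ?thesis unfolding majorant_mass_def .
qed

lemma borel_measurable_majorant_mass [measurable]: "majorant_mass \<in> borel_measurable borel"
  unfolding majorant_mass_def by measurable

lemma majorant_mass_le: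
  assumes s: "s > 0"
  shows "majorant_mass s \<le> ennreal ((1 + 2 * sqrt b * s) * exp (- min a beta * s))"
proof -
  let ?\<omega> = "min a beta"
  have "ennreal (exp (- a * w) * memory_weight s w) * indicator {0..s} w
      \<le> ennreal (sqrt s * exp (- ?\<omega> * s)) * (ennreal (1 / sqrt (s - w)) * indicator {0..s} w)" for w
  proof (cases "w \<in> {0..s}")
    case True
    have "?\<omega> * w + ?\<omega> * (s - w) \<le> a * w + beta * (s - w)"
      using True by (intro add_mono mult_right_mono) auto
    then have "exp (- a * w) * exp (- beta * (s - w)) \<le> exp (- ?\<omega> * s)"
      by (simp add: exp_add[symmetric] algebra_simps)
    then have "exp (- a * w) * memory_weight s w \<le> sqrt s * exp (- ?\<omega> * s) * (1 / sqrt (s - w))"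
      using True unfolding memory_weight_def
      by (auto intro!: mult_mono divide_right_mono simp: divide_inverse mult_ac)
    then show ?thesis
      using True s by (simp add: ennreal_leI ennreal_mult[symmetric])
  qed simp
  then have "(\<integral>\<^sup>+ w. ennreal (exp (- a * w) * memory_weight s w) * indicator {0..s} w \<partial>lborel)
      \<le> ennreal (sqrt s * exp (- ?\<omega> * s)) * (\<integral>\<^sup>+ w. ennreal (1 / sqrt (s - w)) * indicator {0..s} w \<partial>lborel)"
    by (subst nn_integral_cmult[symmetric]) (measurable, intro nn_integral_mono)
  also have "\<dots> = ennreal (sqrt s * exp (- ?\<omega> * s)) * ennreal (2 * sqrt s)"
    by (simp only: nn_integral_inverse_sqrt_diff[OF s])
  also have "\<dots> = ennreal (2 * s * exp (- ?\<omega> * s))"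
    using s by (simp add: ennreal_mult[symmetric] mult_ac)
  finally have memory: "(\<integral>\<^sup>+ w. ennreal (exp (- a * w) * memory_weight s w) * indicator {0..s} w \<partial>lborel)
      \<le> ennreal (2 * s * exp (- ?\<omega> * s))" .
  have "majorant_mass s \<le> ennreal (exp (- ?\<omega> * s)) + ennreal (sqrt b) * ennreal (2 * s * exp (- ?\<omega> * s))"
    unfolding majorant_mass_def using s by (intro add_mono mult_left_mono memory ennreal_leI) (auto intro: mult_right_mono)
  also have "\<dots> = ennreal ((1 + 2 * sqrt b * s) * exp (- ?\<omega> * s))"
    using s b by (simp add: ennreal_mult[symmetric] ennreal_plus[symmetric] algebra_simps del: ennreal_plus)
  finally show ?thesis .
qed

lemma nn_integral_memory_weight_in_s:
  "(\<integral>\<^sup>+ s. ennreal (exp (- a * w) * memory_weight s w) * indicator {0..s} w \<partial>lborel)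
    = ennreal (sqrt pi / sqrt beta) * (ennreal (sqrt w * exp (- a * w)) * indicator {0..} w)"
proof (cases "w \<ge> 0")
  case True
  let ?h = "\<lambda>v. ennreal (exp (- beta * v) / sqrt v) * indicator {0..} v"
  have "ennreal (exp (- a * w) * memory_weight s w) * indicator {0..s} w
      = ennreal (sqrt w * exp (- a * w)) * ?h (s - w)" for s
    using True unfolding memory_weight_def
    by (cases "w \<le> s") (auto simp: indicator_def ennreal_mult[symmetric] mult_ac)
  then have "(\<integral>\<^sup>+ s. ennreal (exp (- a * w) * memory_weight s w) * indicator {0..s} w \<partial>lborel)
      = ennreal (sqrt w * exp (- a * w)) * (\<integral>\<^sup>+ s. ?h (- w + 1 * s) \<partial>lborel)"
    by (simp add: nn_integral_cmult)
  also have "(\<integral>\<^sup>+ s. ?h (- w + 1 * s) \<partial>lborel) = (\<integral>\<^sup>+ v. ?h v \<partial>lborel)"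
    using nn_integral_real_affine[of ?h 1 "- w"] by simp
  also have "(\<integral>\<^sup>+ v. ?h v \<partial>lborel) = ennreal (sqrt pi / sqrt beta)"
    by (rule nn_integral_exp_neg_div_sqrt_halfline[OF beta])
  finally show ?thesis
    using True by (simp add: mult_ac)
qed (simp add: indicator_def)

lemma nn_integral_majorant_mass_le:
  "(\<integral>\<^sup>+ \<tau>. majorant_mass (t - \<tau>) * indicator {0..t} \<tau> \<partial>lborel)
    \<le> ennreal (1 / a + sqrt b * pi / (2 * a powr (3 / 2) * sqrt beta))"
proof -
  let ?G = "\<lambda>s w. ennreal (exp (- a * w) * memory_weight s w) * indicator {0..s} w"
  have "(\<integral>\<^sup>+ \<tau>. majorant_mass (t - \<tau>) * indicator {0..t} \<tau> \<partial>lborel)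
      = (\<integral>\<^sup>+ s. majorant_mass s * indicator {t - t..t} s \<partial>lborel)"
    by (rule nn_integral_reflect_interval) measurable
  also have "\<dots> \<le> (\<integral>\<^sup>+ s. ennreal (exp (- a * s)) * indicator {0..} s
      + ennreal (sqrt b) * (\<integral>\<^sup>+ w. ?G s w \<partial>lborel) \<partial>lborel)"
    unfolding majorant_mass_def
    by (intro nn_integral_mono) (auto simp: indicator_def distrib_right)
  also have "\<dots> = (\<integral>\<^sup>+ s. ennreal (exp (- a * s)) * indicator {0..} s \<partial>lborel)
      + ennreal (sqrt b) * (\<integral>\<^sup>+ s. (\<integral>\<^sup>+ w. ?G s w \<partial>lborel) \<partial>lborel)"
    by (subst nn_integral_add) (measurable, simp add: nn_integral_cmult)
  also have "(\<integral>\<^sup>+ s. ennreal (exp (- a * s)) * indicator {0..} s \<partial>lborel) = ennreal (1 / a)"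
    by (rule nn_integral_exp_neg_halfline[OF a])
  also have "(\<integral>\<^sup>+ s. (\<integral>\<^sup>+ w. ?G s w \<partial>lborel) \<partial>lborel) = (\<integral>\<^sup>+ w. (\<integral>\<^sup>+ s. ?G s w \<partial>lborel) \<partial>lborel)"
    by (rule lborel_pair.Fubini'[symmetric]) measurable
  also have "\<dots> = (\<integral>\<^sup>+ w. ennreal (sqrt pi / sqrt beta) * (ennreal (sqrt w * exp (- a * w)) * indicator {0..} w) \<partial>lborel)"
    by (simp only: nn_integral_memory_weight_in_s)
  also have "\<dots> = ennreal (sqrt pi / sqrt beta) * ennreal (sqrt pi / 2 / a powr (3 / 2))"
    by (subst nn_integral_cmult) (measurable, simp only: nn_integral_sqrt_mult_exp_neg_halfline[OF a])
  also have "ennreal (1 / a) + ennreal (sqrt b) * (ennreal (sqrt pi / sqrt beta) * ennreal (sqrt pi / 2 / a powr (3 / 2)))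
      = ennreal (1 / a + sqrt b * pi / (2 * a powr (3 / 2) * sqrt beta))"
    using a b beta by (simp add: ennreal_mult[symmetric] ennreal_plus[symmetric] field_simps del: ennreal_plus)
  finally show ?thesis .
qed

lemma abs_theta0_le_periodize:
  assumes "s > 0"
  shows "ennreal \<bar>theta0 a b eps beta L z s\<bar> \<le> periodize L (majorant s) z"
proof -
  have "ennreal \<bar>theta0 a b eps beta L z s\<bar>
      \<le> (\<integral>\<^sup>+ n. ennreal \<bar>K0 a b eps beta (z + 2 * of_int n * L) s\<bar> \<partial>count_space (UNIV :: int set))"
    unfolding theta0_def by (rule abs_infsum_le_nn_integral_count_space)
  also have "\<dots> \<le> periodize L (majorant s) z"
    unfolding periodize_def by (intro nn_integral_mono abs_K0_le_majorant assms)
  finally show ?thesis .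
qed

lemma abs_integral_images_le:
  fixes \<phi> :: "real \<Rightarrow> real"
  assumes s: "s > 0" and M: "M \<ge> 0" and \<phi>: "\<And>\<xi>. \<xi> \<in> {0..L} \<Longrightarrow> \<bar>\<phi> \<xi>\<bar> \<le> M"
  shows "ennreal \<bar>integral {0..L} (\<lambda>\<xi>. (theta0 a b eps beta L \<bar>x - \<xi>\<bar> s + theta0 a b eps beta L (x + \<xi>) s) * \<phi> \<xi>)\<bar>
     \<le> ennreal M * majorant_mass s"
proof -
  let ?P = "periodize L (majorant s)"
  have "ennreal \<bar>(theta0 a b eps beta L \<bar>x - \<xi>\<bar> s + theta0 a b eps beta L (x + \<xi>) s) * \<phi> \<xi>\<bar>
      \<le> ennreal M * (?P \<bar>x - \<xi>\<bar> + ?P (x + \<xi>))" if "\<xi> \<in> {0..L}" for \<xi>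
  proof -
    let ?t1 = "theta0 a b eps beta L \<bar>x - \<xi>\<bar> s" and ?t2 = "theta0 a b eps beta L (x + \<xi>) s"
    have "\<bar>(?t1 + ?t2) * \<phi> \<xi>\<bar> \<le> M * (\<bar>?t1\<bar> + \<bar>?t2\<bar>)"
      unfolding abs_mult using \<phi>[OF that] M
      by (metis abs_ge_zero abs_triangle_ineq mult.commute mult_mono)
    then have "ennreal \<bar>(?t1 + ?t2) * \<phi> \<xi>\<bar> \<le> ennreal (M * (\<bar>?t1\<bar> + \<bar>?t2\<bar>))"
      by (rule ennreal_leI)
    also have "\<dots> = ennreal M * (ennreal \<bar>?t1\<bar> + ennreal \<bar>?t2\<bar>)"
      using M by (simp add: ennreal_mult ennreal_plus)
    also have "\<dots> \<le> ennreal M * (?P \<bar>x - \<xi>\<bar> + ?P (x + \<xi>))"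
      by (intro mult_left_mono add_mono abs_theta0_le_periodize s) auto
    finally show ?thesis .
  qed
  then have "ennreal \<bar>integral {0..L} (\<lambda>\<xi>. (theta0 a b eps beta L \<bar>x - \<xi>\<bar> s + theta0 a b eps beta L (x + \<xi>) s) * \<phi> \<xi>)\<bar>
      \<le> (\<integral>\<^sup>+ \<xi>. ennreal M * (?P \<bar>x - \<xi>\<bar> + ?P (x + \<xi>)) * indicator {0..L} \<xi> \<partial>lborel)"
    by (intro abs_integral_le_nn_integral AE_I2) auto
  also have "\<dots> = ennreal M * (\<integral>\<^sup>+ \<xi>. (?P \<bar>x - \<xi>\<bar> + ?P (x + \<xi>)) * indicator {0..L} \<xi> \<partial>lborel)"
    by (subst nn_integral_cmult[symmetric]) (measurable, simp add: mult.assoc)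
  also have "\<dots> = ennreal M * majorant_mass s"
    using nn_integral_periodize_images[OF L borel_measurable_majorant majorant_even]
    by (simp add: nn_integral_majorant[OF s])
  finally show ?thesis .
qed

end

lemma abs_le_norm0:
  assumes "continuous_on {0..L} u0" and "\<xi> \<in> {0..L}"
  shows "\<bar>u0 \<xi>\<bar> \<le> norm0 L u0"
proof -
  have "bdd_above ((\<lambda>x. \<bar>u0 x\<bar>) ` {0..L})"
    by (intro bounded_imp_bdd_above compact_imp_bounded compact_continuous_image)
      (auto intro: continuous_intros assms(1))
  then show ?thesis
    unfolding norm0_def using assms(2) by (auto intro: cSup_upper)
qed

lemma abs_le_normf:
  assumes "bounded ((\<lambda>(x, t). f x t) ` ({0..L} \<times> {0<..T}))" and "\<xi> \<in> {0..L}" "\<tau> \<in> {0<..T}"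
  shows "\<bar>f \<xi> \<tau>\<bar> \<le> normf L T f"
proof -
  obtain B where B: "\<And>z. z \<in> (\<lambda>(x, t). f x t) ` ({0..L} \<times> {0<..T}) \<Longrightarrow> norm z \<le> B"
    using assms(1) unfolding bounded_iff by blast
  have "bdd_above ((\<lambda>(x, t). \<bar>f x t\<bar>) ` ({0..L} \<times> {0<..T}))"
    using B by (intro bdd_aboveI2[where M=B]) fastforce
  then have "(\<lambda>(x, t). \<bar>f x t\<bar>) (\<xi>, \<tau>) \<le> normf L T f"
    unfolding normf_def using assms(2,3) by (intro cSup_upper) auto
  then show ?thesis by simp
qed

lemma norm0_nonneg:
  assumes "L \<ge> 0" and "continuous_on {0..L} u0"
  shows "norm0 L u0 \<ge> 0"
  using abs_le_norm0[OF assms(2), of 0] assms(1) by (auto intro: order_trans[OF abs_ge_zero])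

lemma normf_nonneg:
  assumes "L \<ge> 0" "T > 0" and "bounded ((\<lambda>(x, t). f x t) ` ({0..L} \<times> {0<..T}))"
  shows "normf L T f \<ge> 0"
  using abs_le_normf[OF assms(3), of 0 T] assms(1,2) by (auto intro: order_trans[OF abs_ge_zero])

context K0_kernel
begin

lemma abs_initial_term_le:
  assumes t: "t > 0" and u0: "continuous_on {0..L} u0"
  shows "\<bar>integral {0..L} (\<lambda>\<xi>. (theta0 a b eps beta L \<bar>x - \<xi>\<bar> t + theta0 a b eps beta L (x + \<xi>) t) * u0 \<xi>)\<bar>
    \<le> norm0 L u0 * ((1 + 2 * sqrt b * t) * exp (- min a beta * t))"
proof -
  have M: "norm0 L u0 \<ge> 0" using norm0_nonneg L u0 by simp
  have "ennreal \<bar>integral {0..L} (\<lambda>\<xi>. (theta0 a b eps beta L \<bar>x - \<xi>\<bar> t + theta0 a b eps beta L (x + \<xi>) t) * u0 \<xi>)\<bar>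
      \<le> ennreal (norm0 L u0) * majorant_mass t"
    by (rule abs_integral_images_le[OF t M abs_le_norm0[OF u0]])
  also have "\<dots> \<le> ennreal (norm0 L u0) * ennreal ((1 + 2 * sqrt b * t) * exp (- min a beta * t))"
    by (intro mult_left_mono majorant_mass_le t) auto
  also have "\<dots> = ennreal (norm0 L u0 * ((1 + 2 * sqrt b * t) * exp (- min a beta * t)))"
    using M t b by (simp add: ennreal_mult)
  finally show ?thesis
    using M t b by (subst (asm) ennreal_le_iff) auto
qed

lemma abs_source_term_le:
  assumes t: "0 < t" "t \<le> T" and f: "bounded ((\<lambda>(x, t). f x t) ` ({0..L} \<times> {0<..T}))"
  shows "\<bar>integral {0..t} (\<lambda>\<tau>. integral {0..L} (\<lambda>\<xi>.
      (theta0 a b eps beta L \<bar>x - \<xi>\<bar> (t - \<tau>) + theta0 a b eps beta L (x + \<xi>) (t - \<tau>)) * f \<xi> \<tau>))\<bar>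
    \<le> normf L T f * (1 / a + sqrt b * pi / (2 * a powr (3 / 2) * sqrt beta))"
proof -
  let ?M = "normf L T f"
  let ?C = "1 / a + sqrt b * pi / (2 * a powr (3 / 2) * sqrt beta)"
  let ?inner = "\<lambda>\<tau>. integral {0..L} (\<lambda>\<xi>.
      (theta0 a b eps beta L \<bar>x - \<xi>\<bar> (t - \<tau>) + theta0 a b eps beta L (x + \<xi>) (t - \<tau>)) * f \<xi> \<tau>)"
  have M: "?M \<ge> 0" using normf_nonneg L t f by simp
  have C: "?C \<ge> 0" using a b beta by simp
  have inner: "ennreal \<bar>?inner \<tau>\<bar> \<le> ennreal ?M * majorant_mass (t - \<tau>)" if "\<tau> \<in> {0<..<t}" for \<tau>
    using that t by (intro abs_integral_images_le M abs_le_normf[OF f]) auto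
  have "AE \<tau> in lborel. \<tau> \<in> {0..t} \<longrightarrow> ennreal \<bar>?inner \<tau>\<bar> \<le> ennreal ?M * majorant_mass (t - \<tau>)"
    using AE_lborel_singleton[of 0] AE_lborel_singleton[of t] by eventually_elim (auto intro: inner)
  then have "ennreal \<bar>integral {0..t} ?inner\<bar> \<le> (\<integral>\<^sup>+ \<tau>. ennreal ?M * majorant_mass (t - \<tau>) * indicator {0..t} \<tau> \<partial>lborel)"
    by (intro abs_integral_le_nn_integral) auto
  also have "\<dots> = ennreal ?M * (\<integral>\<^sup>+ \<tau>. majorant_mass (t - \<tau>) * indicator {0..t} \<tau> \<partial>lborel)"
    by (subst nn_integral_cmult[symmetric]) (measurable, simp add: mult.assoc)
  also have "\<dots> \<le> ennreal ?M * ennreal ?C"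
    by (intro mult_left_mono nn_integral_majorant_mass_le) auto
  also have "\<dots> = ennreal (?M * ?C)"
    using M C by (simp add: ennreal_mult)
  finally show ?thesis
    using M C by (subst (asm) ennreal_le_iff) auto
qed

lemma source_constant_le:
  "1 / a + sqrt b * pi / (2 * a powr (3 / 2) * sqrt beta)
    \<le> 1 / a + pi * sqrt b * (a + beta) / (2 * (a * beta) powr (3 / 2))"
proof -
  have "beta powr (1 / 2 + 1) = beta powr (1 / 2) * beta powr 1" by (rule powr_add)
  then have "(a * beta) powr (3 / 2) = a powr (3 / 2) * sqrt beta * beta"
    using a beta by (simp add: powr_mult powr_half_sqrt less_imp_le)
  then have eq: "pi * sqrt b * (a + beta) / (2 * (a * beta) powr (3 / 2))
      = sqrt b * pi / (2 * a powr (3 / 2) * sqrt beta) * ((a + beta) / beta)"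
    using a beta by (simp add: field_simps)
  have "sqrt b * pi / (2 * a powr (3 / 2) * sqrt beta) * 1
      \<le> sqrt b * pi / (2 * a powr (3 / 2) * sqrt beta) * ((a + beta) / beta)"
    using a b beta by (intro mult_left_mono) simp_all
  then show ?thesis unfolding eq by simp
qed

lemma abs_u_sol_le:
  assumes t: "0 < t" "t \<le> T" and f: "bounded ((\<lambda>(x, t). f x t) ` ({0..L} \<times> {0<..T}))"
    and u0: "continuous_on {0..L} u0"
  shows "\<bar>u_sol a b eps beta L f u0 x t\<bar>
    \<le> norm0 L u0 * (1 + sqrt b * pi * t) * exp (- min a beta * t)
      + normf L T f * (1 / a + pi * sqrt b * (a + beta) / (2 * (a * beta) powr (3 / 2)))"
proof -
  have growth: "(1 + 2 * sqrt b * t) * exp (- min a beta * t) \<le> (1 + sqrt b * pi * t) * exp (- min a beta * t)"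
    using t b pi_gt3 by (intro mult_right_mono add_left_mono) (simp_all add: mult_right_mono)
  have "\<bar>u_sol a b eps beta L f u0 x t\<bar>
      \<le> norm0 L u0 * ((1 + 2 * sqrt b * t) * exp (- min a beta * t))
        + normf L T f * (1 / a + sqrt b * pi / (2 * a powr (3 / 2) * sqrt beta))"
    unfolding u_sol_def
    by (rule order_trans[OF abs_triangle_ineq add_mono[OF abs_initial_term_le[OF t(1) u0] abs_source_term_le[OF t f]]])
  also have "\<dots> \<le> norm0 L u0 * (1 + sqrt b * pi * t) * exp (- min a beta * t)
      + normf L T f * (1 / a + pi * sqrt b * (a + beta) / (2 * (a * beta) powr (3 / 2)))"
    unfolding mult.assoc[of "norm0 L u0"] using L t f u0
    by (intro add_mono mult_left_mono growth source_constant_le norm0_nonneg normf_nonneg) auto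
  finally show ?thesis .
qed

end

theorem theorem3p4:
  fixes a b eps beta L :: real
  assumes "a > 0" and "b > 0" and "eps > 0" and "beta > 0" and "L > 0"
  shows "\<exists>t0. \<forall>T (f :: real \<Rightarrow> real \<Rightarrow> real) (u0 :: real \<Rightarrow> real).
           T > 0 \<longrightarrow>
           continuous_on ({0..L} \<times> {0<..T}) (\<lambda>(x, t). f x t) \<longrightarrow>
           bounded ((\<lambda>(x, t). f x t) ` ({0..L} \<times> {0<..T})) \<longrightarrow>
           continuous_on {0..L} u0 \<longrightarrow>
           (\<forall>x t. x \<in> {0..L} \<and> 0 < t \<and> t0 \<le> t \<and> t \<le> T \<longrightarrow>
              \<bar>u_sol a b eps beta L f u0 x t\<bar>
              \<le> 2 * (normf L T f * (1 / a + pi * sqrt b * (a + beta) / (2 * (a * beta) powr (3/2)))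
                     + norm0 L u0 * (1 + sqrt b * pi * t) * exp (- min a beta * t)))"
proof (intro exI[of _ 0] allI impI, elim conjE)
  interpret K0_kernel a b eps beta L using assms by unfold_locales
  fix T :: real and f :: "real \<Rightarrow> real \<Rightarrow> real" and u0 :: "real \<Rightarrow> real" and x t :: real
  assume f: "bounded ((\<lambda>(x, t). f x t) ` ({0..L} \<times> {0<..T}))" and u0: "continuous_on {0..L} u0"
    and t: "0 < t" "t \<le> T"
  let ?\<beta>\<^sub>0 = "1 / a + pi * sqrt b * (a + beta) / (2 * (a * beta) powr (3/2))"
  let ?e = "exp (- min a beta * t)"
  have "0 \<le> normf L T f * ?\<beta>\<^sub>0"
    using normf_nonneg[of L T f] assms f t by (intro mult_nonneg_nonneg) simp_all
  moreover have "0 \<le> norm0 L u0 * (1 + sqrt b * pi * t) * ?e"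
    using norm0_nonneg[of L u0] assms u0 t by (intro mult_nonneg_nonneg) simp_all
  moreover have "\<And>X Y Z :: real. Z \<le> Y + X \<Longrightarrow> 0 \<le> X \<Longrightarrow> 0 \<le> Y \<Longrightarrow> Z \<le> 2 * (X + Y)" by auto
  ultimately show "\<bar>u_sol a b eps beta L f u0 x t\<bar> \<le> 2 * (normf L T f * ?\<beta>\<^sub>0 + norm0 L u0 * (1 + sqrt b * pi * t) * ?e)"
    using abs_u_sol_le[OF t f u0] by blast
qed

end
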